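(* Let $d \ge 1$ and $\rho \ge 0$ be integers and let $r^{(1)}, \dots, r^{(\rho)} \in (0,1)^d$ be pairwise incomparable points such that for each $j \in [d]$ the $\rho$ values $r^{(i)}_j$, $i \in [\rho]$, are distinct. Let $S$ be the record-setting region and $I$ the set of interior generators of these points. A point $g \in [0,1)^d$ belongs to $I$ if and only if (i) $g \in S$, and (ii) there exist $d$ distinct indices $i_1, \dots, i_d \in [\rho]$ such that $$g_j = r^{(i_j)}_j = \min\{ r^{(i_\ell)}_j : \ell \in [d]\} \quad \text{for every } j \in [d].$$
   Context: Notation: $[n] = \{1,\dots,n\}$. For $x,y \in \mathbb{R}^d$, $x \prec y$ means $x_j < y_j$ for all $j \in [d]$; $x \le y$ means $x_j \le y_j$ for all $j$; $x < y$ means $x \le y$ and $x \ne y$. Two points are incomparable if neither is $\le$ the other. Given points $r^{(1)},\dots,r^{(\rho)}$ (the "current records"), the record-setting region is $S := \{x \in [0,1)^d : x \not\prec r^{(i)} \text{ for all } i \in [\rho]\}$. The generators of $S$ are the minimal elements of $S$ with respect to the partial order $\le$; the set of generators is denoted $G$. A point $x \in [0,1)^d$ is interior if all its coordinates are nonzero, and $I := \{g \in G : g \text{ interior}\}$ is the set of interior generators. *)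

theory Defs
  imports "HOL-Analysis.Analysis"
begin

text \<open>Points of R^d are vectors real^'d, the index type 'd having d = CARD('d) elements.\<close>

definition vstrict :: "real^'d \<Rightarrow> real^'d \<Rightarrow> bool" where
  "vstrict x y \<longleftrightarrow> (\<forall>j. x $ j < y $ j)"

definition vle :: "real^'d \<Rightarrow> real^'d \<Rightarrow> bool" where
  "vle x y \<longleftrightarrow> (\<forall>j. x $ j \<le> y $ j)"

definition halfopen_cube :: "(real^'d) set" where
  "halfopen_cube = {x. \<forall>j. 0 \<le> x $ j \<and> x $ j < 1}"

definition open_cube :: "(real^'d) set" where
  "open_cube = {x. \<forall>j. 0 < x $ j \<and> x $ j < 1}"

definition record_region :: "(nat \<Rightarrow> real^'d) \<Rightarrow> nat \<Rightarrow> (real^'d) set" where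
  "record_region r \<rho> = {x \<in> halfopen_cube. \<forall>i\<in>{1..\<rho>}. \<not> vstrict x (r i)}"

definition generators :: "(nat \<Rightarrow> real^'d) \<Rightarrow> nat \<Rightarrow> (real^'d) set" where
  "generators r \<rho> = {g \<in> record_region r \<rho>.
      \<not> (\<exists>x\<in>record_region r \<rho>. vle x g \<and> x \<noteq> g)}"

definition interior_pt :: "real^'d \<Rightarrow> bool" where
  "interior_pt x \<longleftrightarrow> (\<forall>j. x $ j \<noteq> 0)"

definition interior_generators :: "(nat \<Rightarrow> real^'d) \<Rightarrow> nat \<Rightarrow> (real^'d) set" where
  "interior_generators r \<rho> = {g \<in> generators r \<rho>. interior_pt g}"

end

theory Submission
  imports Defs
begin

text \<open>
  A generator g with g_j > 0 cannot be lowered in coordinate j, so some record r_i must block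
  it: r_i agrees with g in coordinate j and lies strictly above g in all other coordinates.
  The records blocking the d coordinates are pairwise distinct and give the indices i_j; since
  r_(i_j) is strictly above g off coordinate j, g_j is the minimum of the j-th coordinates.
  Conversely, records with this property block every strict lowering of g, so g is minimal in S,
  and g is interior because the records lie in the open cube.
\<close>

definition blocking_indices :: "(nat \<Rightarrow> real^'d) \<Rightarrow> nat \<Rightarrow> real^'d \<Rightarrow> ('d \<Rightarrow> nat) \<Rightarrow> bool" where
  "blocking_indices r \<rho> g idx \<longleftrightarrow>
     (\<forall>j. idx j \<in> {1..\<rho>} \<and> g $ j = r (idx j) $ j \<and> (\<forall>k. k \<noteq> j \<longrightarrow> g $ k < r (idx j) $ k))"

lemma lower_coord_in_record_region:
  fixes r :: "nat \<Rightarrow> real^'d" and x :: "real^'d"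
  assumes x_cube: "x \<in> halfopen_cube" and t: "0 \<le> t" "t \<le> x $ j"
    and unblocked: "\<And>i. i \<in> {1..\<rho>} \<Longrightarrow> \<forall>k. k \<noteq> j \<longrightarrow> x $ k < r i $ k \<Longrightarrow> r i $ j \<le> t"
  shows "(\<chi> k. if k = j then t else x $ k) \<in> record_region r \<rho>"
proof -
  let ?y = "\<chi> k. if k = j then t else x $ k"
  have "x $ j < 1" using x_cube by (simp add: halfopen_cube_def)
  with t have "t < 1" by linarith
  with x_cube t have "?y \<in> halfopen_cube"
    unfolding halfopen_cube_def by auto
  moreover have "\<not> vstrict ?y (r i)" if i: "i \<in> {1..\<rho>}" for i
  proof (cases "\<forall>k. k \<noteq> j \<longrightarrow> x $ k < r i $ k")
    case True
    with unblocked[OF i] have "\<not> ?y $ j < r i $ j" by simp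
    then show ?thesis unfolding vstrict_def by blast
  next
    case False
    then obtain k where "k \<noteq> j" "\<not> x $ k < r i $ k" by blast
    then have "\<not> ?y $ k < r i $ k" by simp
    then show ?thesis unfolding vstrict_def by blast
  qed
  ultimately show ?thesis unfolding record_region_def by blast
qed

lemma generator_blocked_by_record:
  fixes r :: "nat \<Rightarrow> real^'d" and g :: "real^'d"
  assumes gen: "g \<in> generators r \<rho>" and nonzero: "g $ j \<noteq> 0"
  shows "\<exists>i\<in>{1..\<rho>}. g $ j = r i $ j \<and> (\<forall>k. k \<noteq> j \<longrightarrow> g $ k < r i $ k)"
proof (rule ccontr)
  assume not_blocked: "\<not> ?thesis"
  have gS: "g \<in> record_region r \<rho>" and minimal: "\<not> (\<exists>x\<in>record_region r \<rho>. vle x g \<and> x \<noteq> g)"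
    using gen unfolding generators_def by auto
  then have g_cube: "g \<in> halfopen_cube" unfolding record_region_def by blast
  then have "0 \<le> g $ j" by (simp add: halfopen_cube_def)
  with nonzero have g_pos: "0 < g $ j" by linarith
  define B where "B = {i \<in> {1..\<rho>}. \<forall>k. k \<noteq> j \<longrightarrow> g $ k < r i $ k}"
  have B_below: "r i $ j < g $ j" if "i \<in> B" for i
  proof -
    have i: "i \<in> {1..\<rho>}" and above: "\<forall>k. k \<noteq> j \<longrightarrow> g $ k < r i $ k"
      using that unfolding B_def by auto
    have "\<not> vstrict g (r i)" using gS i unfolding record_region_def by auto
    with above have "r i $ j \<le> g $ j" unfolding vstrict_def by (metis not_le)
    moreover have "g $ j \<noteq> r i $ j" using not_blocked i above by auto
    ultimately show ?thesis by simp
  qed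
  \<comment> \<open>Lowering coordinate j to the largest blocking value t (or 0) keeps g inside S.\<close>
  define t where "t = Max (insert 0 ((\<lambda>i. r i $ j) ` B))"
  have finB: "finite B" unfolding B_def by simp
  have t_less: "t < g $ j" unfolding t_def using finB B_below g_pos by (subst Max_less_iff) auto
  have t_nonneg: "0 \<le> t" and t_upper: "\<And>i. i \<in> B \<Longrightarrow> r i $ j \<le> t"
    unfolding t_def using finB by (auto intro: Max_ge)
  define x where "x = (\<chi> k. if k = j then t else g $ k)"
  have "x \<in> record_region r \<rho>"
    unfolding x_def using t_nonneg t_less t_upper
    by (intro lower_coord_in_record_region[OF g_cube]) (auto simp: B_def)
  moreover have "vle x g" and "x \<noteq> g"
    using t_less unfolding x_def vle_def by (auto simp: vec_eq_iff)
  ultimately show False using minimal by blast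
qed

lemma interior_generator_has_blocking_indices:
  assumes "g \<in> generators r \<rho>" and "interior_pt g"
  shows "\<exists>idx. blocking_indices r \<rho> g idx"
  using generator_blocked_by_record[OF assms(1)] assms(2)
  unfolding blocking_indices_def interior_pt_def by metis

lemma generatorI_blocking_indices:
  fixes r :: "nat \<Rightarrow> real^'d" and g :: "real^'d"
  assumes gS: "g \<in> record_region r \<rho>" and blocking: "blocking_indices r \<rho> g idx"
  shows "g \<in> generators r \<rho>"
proof -
  have "\<not> vle x g \<or> x = g" if xS: "x \<in> record_region r \<rho>" for x
  proof (rule ccontr)
    assume "\<not> (\<not> vle x g \<or> x = g)"
    then have xle: "vle x g" and "x \<noteq> g" by auto
    then obtain j where "x $ j \<noteq> g $ j" by (metis vec_eq_iff)
    with xle have "x $ j < g $ j" unfolding vle_def by (metis less_eq_real_def)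
    with xle blocking have "vstrict x (r (idx j))"
      unfolding blocking_indices_def vstrict_def vle_def by (metis le_less_trans)
    with xS blocking show False unfolding blocking_indices_def record_region_def by blast
  qed
  with gS show ?thesis unfolding generators_def by blast
qed

lemma Min_range_eqI:
  fixes f :: "'d::finite \<Rightarrow> real"
  assumes "\<And>l. a \<le> f l" and "a = f j"
  shows "a = Min {f l | l. True}"
  using assms by (intro Min_eqI[symmetric]) (auto simp: full_SetCompr_eq)

lemma Min_range_le:
  fixes f :: "'d::finite \<Rightarrow> real"
  shows "Min {f l | l. True} \<le> f j"
  by (rule Min_le) (auto simp: full_SetCompr_eq)

lemma blocking_indicesD:
  assumes "blocking_indices r \<rho> g idx"
  shows "idx j \<in> {1..\<rho>}" and "g $ j = r (idx j) $ j" and "k \<noteq> j \<Longrightarrow> g $ k < r (idx j) $ k"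
  using assms unfolding blocking_indices_def by blast+

lemma blocking_indices_inj:
  assumes "blocking_indices r \<rho> g idx"
  shows "inj idx"
proof (rule injI)
  fix j l assume same: "idx j = idx l"
  show "j = l"
  proof (rule ccontr)
    assume "j \<noteq> l"
    then have "g $ l < r (idx j) $ l" by (intro blocking_indicesD(3)[OF assms]) simp
    with same show False using blocking_indicesD(2)[OF assms, of l] by simp
  qed
qed

lemma blocking_indices_Min:
  fixes g :: "real^'d"
  assumes "blocking_indices r \<rho> g idx"
  shows "g $ j = Min {r (idx l) $ j | l. True}"
proof (rule Min_range_eqI)
  show "g $ j \<le> r (idx l) $ j" for l
  proof (cases "l = j")
    case True
    then show ?thesis using blocking_indicesD(2)[OF assms, of j] by simp
  next
    case False
    then show ?thesis using blocking_indicesD(3)[OF assms, of j l] by simp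
  qed
qed (rule blocking_indicesD(2)[OF assms])

lemma blocking_indicesI_Min:
  fixes r :: "nat \<Rightarrow> real^'d" and g :: "real^'d"
  assumes distinct_coords: "\<forall>j. inj_on (\<lambda>i. r i $ j) {1..\<rho>}"
    and "inj idx" and idx: "\<And>j. idx j \<in> {1..\<rho>}" and attained: "\<And>j. g $ j = r (idx j) $ j"
    and minimum: "\<And>j. g $ j = Min {r (idx l) $ j | l. True}"
  shows "blocking_indices r \<rho> g idx"
proof -
  \<comment> \<open>Distinct coordinates upgrade the minimum to a strict one off the diagonal.\<close>
  have "g $ k < r (idx j) $ k" if "k \<noteq> j" for j k
  proof -
    have "idx k \<noteq> idx j" using \<open>inj idx\<close> that by (auto dest: injD)
    then have "r (idx k) $ k \<noteq> r (idx j) $ k"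
      using inj_onD[OF spec[OF distinct_coords, of k] _ idx idx] by blast
    moreover have "g $ k \<le> r (idx j) $ k"
      using minimum[of k] Min_range_le[of "\<lambda>l. r (idx l) $ k" j] by simp
    ultimately show ?thesis using attained[of k] by simp
  qed
  with idx attained show ?thesis unfolding blocking_indices_def by blast
qed

lemma interior_pt_if_attained:
  fixes g :: "real^'d"
  assumes "\<forall>i\<in>{1..\<rho>}. r i \<in> open_cube" and "\<And>j. idx j \<in> {1..\<rho>}"
    and attained: "\<And>j. g $ j = r (idx j) $ j"
  shows "interior_pt g"
  unfolding interior_pt_def
proof
  fix j
  have "r (idx j) \<in> open_cube" using assms(1,2) by blast
  then have "0 < r (idx j) $ j" by (simp add: open_cube_def)
  then show "g $ j \<noteq> 0" using attained[of j] by simp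
qed

theorem theoremT:
  fixes r :: "nat \<Rightarrow> real^'d" and \<rho> :: nat and g :: "real^'d"
  assumes in_cube: "\<forall>i\<in>{1..\<rho>}. r i \<in> open_cube"
    and incomparable: "\<forall>i\<in>{1..\<rho>}. \<forall>k\<in>{1..\<rho>}. i \<noteq> k \<longrightarrow> \<not> vle (r i) (r k)"
    and distinct_coords: "\<forall>j. inj_on (\<lambda>i. r i $ j) {1..\<rho>}"
    and g_cube: "g \<in> halfopen_cube"
  shows "g \<in> interior_generators r \<rho> \<longleftrightarrow>
           (g \<in> record_region r \<rho> \<and>
            (\<exists>idx :: 'd \<Rightarrow> nat. inj idx \<and> (\<forall>j. idx j \<in> {1..\<rho>}) \<and>
               (\<forall>j. g $ j = r (idx j) $ j \<and> g $ j = Min {r (idx l) $ j | l. True})))"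
    (is "_ \<longleftrightarrow> g \<in> record_region r \<rho> \<and> (\<exists>idx. ?index_map idx)")
proof
  assume "g \<in> interior_generators r \<rho>"
  then have gen: "g \<in> generators r \<rho>" and "interior_pt g"
    unfolding interior_generators_def by auto
  then obtain idx where blocking: "blocking_indices r \<rho> g idx"
    using interior_generator_has_blocking_indices by blast
  then have "?index_map idx"
    using blocking_indices_inj blocking_indices_Min unfolding blocking_indices_def by blast
  with gen show "g \<in> record_region r \<rho> \<and> (\<exists>idx. ?index_map idx)"
    unfolding generators_def by blast
next
  assume "g \<in> record_region r \<rho> \<and> (\<exists>idx. ?index_map idx)"
  then obtain idx where gS: "g \<in> record_region r \<rho>" and "inj idx"
    and idx: "\<And>j. idx j \<in> {1..\<rho>}" and attained: "\<And>j. g $ j = r (idx j) $ j"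
    and minimum: "\<And>j. g $ j = Min {r (idx l) $ j | l. True}" by blast
  have "blocking_indices r \<rho> g idx"
    using blocking_indicesI_Min[OF distinct_coords \<open>inj idx\<close> idx attained minimum] .
  moreover have "interior_pt g"
    using interior_pt_if_attained[OF in_cube idx attained] .
  ultimately show "g \<in> interior_generators r \<rho>"
    using gS generatorI_blocking_indices unfolding interior_generators_def by blast
qed

end
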